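(* Let $v\in\Sigma^*$, let $u$ be a $v$-minimal word, $i\in\mathrm{supp}(u)$, and $r_i=\mathrm{Rnk}(\mathcal{I}_i)$. Then $|\mathcal{I}_i/\!\sim_i|\le D(2,r_i,n)+1$. In particular, for any $g\in\mathcal{I}_i$ there is a word $z$ with $|z|\le D(2,r_i,n)$ such that $g\theta_i(z)\sim_i 0_i$.
   Context: Let $\mathcal{A}=\langle Q,\Sigma,\delta\rangle$ be a synchronizing automaton with $n=|Q|$ states $q_1,\dots,q_n$; write $q\cdot u$ for the action of $u\in\Sigma^*$ (extended to subsets) and $\mathrm{rk}(u)=|Q\cdot u|$. Each word acts linearly on $\mathbb{C}Q$ by $q\mapsto q\cdot u$, preserving $w^\perp=\{x:\langle x,q_1+\dots+q_n\rangle=0\}$; let $\rho:\Sigma^*\to\mathbb{M}_{n-1}(\mathbb{C})$ be the induced representation and $\mathcal{R}$ the $\mathbb{C}$-algebra generated by $\rho(\Sigma^* )$. Write $\mathcal{R}/\mathrm{Rad}(\mathcal{R})\cong\prod_{i=1}^k\mathbb{M}_{n_i}(\mathbb{C})$ (Jacobson radical, Wedderburn–Artin) and let $\theta_i:\Sigma^*\to\mathbb{M}_{n_i}(\mathbb{C})$ be $\rho$ followed by the quotient map and the $i$-th projection; $0_i$ is the zero matrix. The monoid $\theta_i(\Sigma^* )$ has a unique $0$-minimal ideal $\mathcal{I}_i$; $\mathrm{Rnk}(\mathcal{I}_i)=\min\{\mathrm{rk}(x): x\in\Sigma^*,\ \theta_i(x)\in\mathcal{I}_i\setminus\{0_i\}\}$.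 The support of a word $z$ is $\mathrm{supp}(z)=\{i:\theta_i(z)\neq0_i\}$. For $v\in\Sigma^*$, a word $u\in\Sigma^*v\Sigma^*$ is $v$-minimal if $\mathrm{supp}(u)\neq\emptyset$ and there is no $z\in\Sigma^*v\Sigma^*$ with $\emptyset\neq\mathrm{supp}(z)\subsetneq\mathrm{supp}(u)$. For such $u$, $i\in\mathrm{supp}(u)$ and $g\in\mathcal{I}_i$, a word $w$ $u$-represents $g$ if $w\in\Sigma^*u\Sigma^*$, $\theta_i(w)=g$, and either $g=0_i$ or $\mathrm{rk}(w)$ is minimum among all words $w'\in\Sigma^*u\Sigma^*$ with $\theta_i(w')=g$. Define $\sigma_i$ on $\mathcal{I}_i$ by $g\,\sigma_i\,f$ iff $g=f$ or there exist words $w_1,w_2$ that $u$-represent $g$ and $f$ respectively with $|Q\cdot w_1\cap Q\cdot w_2|>1$; let $\sim_i$ be the transitive closure of $\sigma_i$ (an equivalence relation on $\mathcal{I}_i$). $D(2,r,n)$ denotes the maximum size of a family of $r$-element subsets of $[1,n]$ in which every $2$-element subset is contained in at most one member. *)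

theory Defs
  imports "Jordan_Normal_Form.Matrix"
begin

text \<open>States are 0,...,n-1 (q_1,...,q_n of the paper); the alphabet is a finite set
  of letters; the transition function is delta; words are lists over the alphabet.\<close>

definition is_DFA :: "nat \<Rightarrow> 'a set \<Rightarrow> (nat \<Rightarrow> 'a \<Rightarrow> nat) \<Rightarrow> bool" where
  "is_DFA n Alph delta \<longleftrightarrow> finite Alph \<and> (\<forall>q<n. \<forall>a\<in>Alph. delta q a < n)"

definition act :: "(nat \<Rightarrow> 'a \<Rightarrow> nat) \<Rightarrow> nat \<Rightarrow> 'a list \<Rightarrow> nat" where
  "act delta q w = foldl delta q w"

definition img :: "nat \<Rightarrow> (nat \<Rightarrow> 'a \<Rightarrow> nat) \<Rightarrow> 'a list \<Rightarrow> nat set" where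
  "img n delta w = (\<lambda>q. act delta q w) ` {..<n}"

definition rk :: "nat \<Rightarrow> (nat \<Rightarrow> 'a \<Rightarrow> nat) \<Rightarrow> 'a list \<Rightarrow> nat" where
  "rk n delta w = card (img n delta w)"

definition synchronizing :: "nat \<Rightarrow> 'a set \<Rightarrow> (nat \<Rightarrow> 'a \<Rightarrow> nat) \<Rightarrow> bool" where
  "synchronizing n Alph delta \<longleftrightarrow> (\<exists>w\<in>lists Alph. rk n delta w = 1)"

definition factor_words :: "'a set \<Rightarrow> 'a list \<Rightarrow> 'a list set" where
  "factor_words Alph v = {a @ v @ b | a b. a \<in> lists Alph \<and> b \<in> lists Alph}"

text \<open>Words act on row vectors of C^Q by q \<mapsto> q.u.  We use the basis
  b_j = q_j - q_{n-1} (j < n-1) of the invariant subspace w^perp; in this basis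
  b_j . u = b_{j.u} - b_{(n-1).u}, where b_{n-1} = 0.  Matrices act on row vectors
  from the right, so rho(uv) = rho(u) rho(v).\<close>

definition rho :: "nat \<Rightarrow> (nat \<Rightarrow> 'a \<Rightarrow> nat) \<Rightarrow> 'a list \<Rightarrow> complex mat" where
  "rho n delta w = mat (n - 1) (n - 1)
     (\<lambda>(j, c). (if act delta j w = c then 1 else 0) - (if act delta (n - 1) w = c then 1 else 0))"

inductive_set gen_alg :: "nat \<Rightarrow> complex mat set \<Rightarrow> complex mat set" for m S where
  gen: "A \<in> S \<Longrightarrow> A \<in> gen_alg m S"
| one: "1\<^sub>m m \<in> gen_alg m S"
| zero: "0\<^sub>m m m \<in> gen_alg m S"
| add: "A \<in> gen_alg m S \<Longrightarrow> B \<in> gen_alg m S \<Longrightarrow> A + B \<in> gen_alg m S"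
| smult: "A \<in> gen_alg m S \<Longrightarrow> c \<cdot>\<^sub>m A \<in> gen_alg m S"
| mult: "A \<in> gen_alg m S \<Longrightarrow> B \<in> gen_alg m S \<Longrightarrow> A * B \<in> gen_alg m S"

definition algR :: "nat \<Rightarrow> 'a set \<Rightarrow> (nat \<Rightarrow> 'a \<Rightarrow> nat) \<Rightarrow> complex mat set" where
  "algR n Alph delta = gen_alg (n - 1) (rho n delta ` lists Alph)"

definition left_ideal :: "nat \<Rightarrow> complex mat set \<Rightarrow> complex mat set \<Rightarrow> bool" where
  "left_ideal m R L \<longleftrightarrow> L \<subseteq> R \<and> 0\<^sub>m m m \<in> L \<and> (\<forall>x\<in>L. \<forall>y\<in>L. x + y \<in> L)
     \<and> (\<forall>x\<in>L. - x \<in> L) \<and> (\<forall>r\<in>R. \<forall>x\<in>L. r * x \<in> L)"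

definition maximal_left_ideal :: "nat \<Rightarrow> complex mat set \<Rightarrow> complex mat set \<Rightarrow> bool" where
  "maximal_left_ideal m R L \<longleftrightarrow> left_ideal m R L \<and> L \<noteq> R
     \<and> (\<forall>L'. left_ideal m R L' \<and> L \<subseteq> L' \<longrightarrow> L' = L \<or> L' = R)"

definition jacobson_radical :: "nat \<Rightarrow> complex mat set \<Rightarrow> complex mat set" where
  "jacobson_radical m R = R \<inter> \<Inter> {L. maximal_left_ideal m R L}"

text \<open>Phi is a surjective unital C-algebra homomorphism from R onto
  prod_{i<k} M_{ns i}(C) whose kernel is the Jacobson radical, i.e. it induces an
  isomorphism R/Rad(R) \<cong> prod_{i<k} M_{ns i}(C).  Phi x i is the i-th component.\<close>

definition WA_decomposition :: "nat \<Rightarrow> complex mat set \<Rightarrow> nat \<Rightarrow> (nat \<Rightarrow> nat)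
    \<Rightarrow> (complex mat \<Rightarrow> nat \<Rightarrow> complex mat) \<Rightarrow> bool" where
  "WA_decomposition m R k ns Phi \<longleftrightarrow>
     (\<forall>i<k. 0 < ns i)
   \<and> (\<forall>x\<in>R. \<forall>i<k. Phi x i \<in> carrier_mat (ns i) (ns i))
   \<and> (\<forall>x\<in>R. \<forall>y\<in>R. \<forall>i<k. Phi (x + y) i = Phi x i + Phi y i)
   \<and> (\<forall>x\<in>R. \<forall>c. \<forall>i<k. Phi (c \<cdot>\<^sub>m x) i = c \<cdot>\<^sub>m Phi x i)
   \<and> (\<forall>x\<in>R. \<forall>y\<in>R. \<forall>i<k. Phi (x * y) i = Phi x i * Phi y i)
   \<and> (\<forall>i<k. Phi (1\<^sub>m m) i = 1\<^sub>m (ns i))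
   \<and> (\<forall>A. (\<forall>i<k. A i \<in> carrier_mat (ns i) (ns i)) \<longrightarrow> (\<exists>x\<in>R. \<forall>i<k. Phi x i = A i))
   \<and> (\<forall>x\<in>R. (\<forall>i<k. Phi x i = 0\<^sub>m (ns i) (ns i)) \<longleftrightarrow> x \<in> jacobson_radical m R)"

definition theta :: "nat \<Rightarrow> (nat \<Rightarrow> 'a \<Rightarrow> nat) \<Rightarrow> (complex mat \<Rightarrow> nat \<Rightarrow> complex mat)
    \<Rightarrow> nat \<Rightarrow> 'a list \<Rightarrow> complex mat" where
  "theta n delta Phi i w = Phi (rho n delta w) i"

definition mon_ideal :: "complex mat set \<Rightarrow> complex mat set \<Rightarrow> bool" where
  "mon_ideal M I \<longleftrightarrow> I \<subseteq> M \<and> I \<noteq> {} \<and> (\<forall>s\<in>M. \<forall>x\<in>I. s * x \<in> I \<and> x * s \<in> I)"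

definition zero_minimal_ideal :: "complex mat set \<Rightarrow> complex mat \<Rightarrow> complex mat set \<Rightarrow> bool" where
  "zero_minimal_ideal M Z I \<longleftrightarrow> mon_ideal M I \<and> I \<noteq> {Z}
     \<and> (\<forall>J. mon_ideal M J \<and> J \<subseteq> I \<longrightarrow> J = {Z} \<or> J = I)"

definition Rnk :: "nat \<Rightarrow> 'a set \<Rightarrow> (nat \<Rightarrow> 'a \<Rightarrow> nat) \<Rightarrow> (nat \<Rightarrow> nat)
    \<Rightarrow> (complex mat \<Rightarrow> nat \<Rightarrow> complex mat) \<Rightarrow> nat \<Rightarrow> complex mat set \<Rightarrow> nat" where
  "Rnk n Alph delta ns Phi i I = Min {rk n delta x | x. x \<in> lists Alph
      \<and> theta n delta Phi i x \<in> I \<and> theta n delta Phi i x \<noteq> 0\<^sub>m (ns i) (ns i)}"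

definition supp :: "nat \<Rightarrow> (nat \<Rightarrow> 'a \<Rightarrow> nat) \<Rightarrow> nat \<Rightarrow> (nat \<Rightarrow> nat)
    \<Rightarrow> (complex mat \<Rightarrow> nat \<Rightarrow> complex mat) \<Rightarrow> 'a list \<Rightarrow> nat set" where
  "supp n delta k ns Phi z = {i. i < k \<and> theta n delta Phi i z \<noteq> 0\<^sub>m (ns i) (ns i)}"

definition v_minimal :: "nat \<Rightarrow> 'a set \<Rightarrow> (nat \<Rightarrow> 'a \<Rightarrow> nat) \<Rightarrow> nat \<Rightarrow> (nat \<Rightarrow> nat)
    \<Rightarrow> (complex mat \<Rightarrow> nat \<Rightarrow> complex mat) \<Rightarrow> 'a list \<Rightarrow> 'a list \<Rightarrow> bool" where
  "v_minimal n Alph delta k ns Phi v u \<longleftrightarrow>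
     u \<in> factor_words Alph v \<and> supp n delta k ns Phi u \<noteq> {}
   \<and> \<not> (\<exists>z\<in>factor_words Alph v. supp n delta k ns Phi z \<noteq> {}
          \<and> supp n delta k ns Phi z \<subset> supp n delta k ns Phi u)"

definition u_represents :: "nat \<Rightarrow> 'a set \<Rightarrow> (nat \<Rightarrow> 'a \<Rightarrow> nat) \<Rightarrow> (nat \<Rightarrow> nat)
    \<Rightarrow> (complex mat \<Rightarrow> nat \<Rightarrow> complex mat) \<Rightarrow> 'a list \<Rightarrow> nat \<Rightarrow> complex mat \<Rightarrow> 'a list \<Rightarrow> bool" where
  "u_represents n Alph delta ns Phi u i g w \<longleftrightarrow>
     w \<in> factor_words Alph u \<and> theta n delta Phi i w = g
   \<and> (g = 0\<^sub>m (ns i) (ns i)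
      \<or> (\<forall>w'\<in>factor_words Alph u. theta n delta Phi i w' = g \<longrightarrow> rk n delta w \<le> rk n delta w'))"

definition sigma_rel :: "nat \<Rightarrow> 'a set \<Rightarrow> (nat \<Rightarrow> 'a \<Rightarrow> nat) \<Rightarrow> (nat \<Rightarrow> nat)
    \<Rightarrow> (complex mat \<Rightarrow> nat \<Rightarrow> complex mat) \<Rightarrow> 'a list \<Rightarrow> nat \<Rightarrow> complex mat set
    \<Rightarrow> (complex mat \<times> complex mat) set" where
  "sigma_rel n Alph delta ns Phi u i I = {(g, f). g \<in> I \<and> f \<in> I \<and>
     (g = f \<or> (\<exists>w1 w2. u_represents n Alph delta ns Phi u i g w1
                     \<and> u_represents n Alph delta ns Phi u i f w2
                     \<and> card (img n delta w1 \<inter> img n delta w2) > 1))}"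

definition sim_rel :: "nat \<Rightarrow> 'a set \<Rightarrow> (nat \<Rightarrow> 'a \<Rightarrow> nat) \<Rightarrow> (nat \<Rightarrow> nat)
    \<Rightarrow> (complex mat \<Rightarrow> nat \<Rightarrow> complex mat) \<Rightarrow> 'a list \<Rightarrow> nat \<Rightarrow> complex mat set
    \<Rightarrow> (complex mat \<times> complex mat) set" where
  "sim_rel n Alph delta ns Phi u i I = (sigma_rel n Alph delta ns Phi u i I)\<^sup>+"

definition D2 :: "nat \<Rightarrow> nat \<Rightarrow> nat" where
  "D2 r n = Max {card F | F. F \<subseteq> {S. S \<subseteq> {1..n} \<and> card S = r}
      \<and> (\<forall>P. P \<subseteq> {1..n} \<and> card P = 2 \<longrightarrow> card {S\<in>F. P \<subseteq> S} \<le> 1)}"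

end

theory Submission
  imports Defs
begin

(* Let r = Rnk(I_i) and fix a word x of rank r with theta_i(x) in I_i - {0}.  Since the full
   matrix algebra M_(n_i)(C) is prime and the theta_i-images of words span it, theta_i(x a u b x)
   is nonzero for some words a, b; so the monoid ideal generated by these elements is all of I_i
   by 0-minimality.  Hence every g in I_i - {0} is represented by words of Sigma^* u Sigma^* of rank
   exactly r, and if g theta_i(z) is still nonzero then z acts injectively on the image Q.w of
   such a representative w, and w z represents g theta_i(z).  Consequently sigma_i, hence ~_i, is
   compatible with right multiplication.  Choosing a representative w_C for every class C other
   than the class of 0, the images Q.w_C are r-subsets of Q, and two of them sharing two states
   lie in the same class: so there are at most D(2,r,n) such classes.  Finally, along a shortest
   z with g theta_i(z) ~_i 0 the classes of g theta_i(p), p a proper prefix of z, are nonzero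
   and pairwise distinct, whence |z| <= D(2,r,n). *)


lemma act_Nil [simp]: "act delta q [] = q"
  by (simp add: act_def)

lemma act_append: "act delta q (w @ z) = act delta (act delta q w) z"
  by (simp add: act_def)

lemma act_less:
  assumes "is_DFA n Alph delta" "q < n" "w \<in> lists Alph"
  shows "act delta q w < n"
  using assms(2,3)
proof (induction w arbitrary: q)
  case (Cons a w)
  then show ?case using assms(1) by (simp add: act_def is_DFA_def)
qed simp

lemma img_append: "img n delta (w @ z) = (\<lambda>q. act delta q z) ` img n delta w"
  by (simp add: img_def act_append image_image)

lemma img_subset_lessThan:
  "is_DFA n Alph delta \<Longrightarrow> w \<in> lists Alph \<Longrightarrow> img n delta w \<subseteq> {..<n}"
  using act_less by (fastforce simp: img_def)

lemma finite_img [simp]: "finite (img n delta w)"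
  by (simp add: img_def)

lemma rk_le: "rk n delta w \<le> n"
  unfolding rk_def img_def by (metis card_image_le card_lessThan finite_lessThan)

lemma rk_append_le_prefix: "rk n delta (w @ z) \<le> rk n delta w"
  unfolding rk_def img_append by (simp add: card_image_le)

lemma rk_append_le_suffix:
  assumes "is_DFA n Alph delta" "w \<in> lists Alph"
  shows "rk n delta (w @ z) \<le> rk n delta z"
  unfolding rk_def img_append
  using img_subset_lessThan[OF assms] by (intro card_mono) (auto simp: img_def)

lemma rk_factor_le:
  assumes "is_DFA n Alph delta" "w \<in> factor_words Alph x"
  shows "rk n delta w \<le> rk n delta x"
proof -
  obtain a b where "w = a @ x @ b" "a \<in> lists Alph" using assms(2) by (auto simp: factor_words_def)
  then show ?thesis
    using rk_append_le_suffix[OF assms(1)] rk_append_le_prefix by (metis le_trans)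
qed

lemma factor_words_lists:
  "x \<in> lists Alph \<Longrightarrow> w \<in> factor_words Alph x \<Longrightarrow> w \<in> lists Alph"
  by (auto simp: factor_words_def)

lemma factor_words_append:
  assumes "w \<in> factor_words Alph x" "z \<in> lists Alph"
  shows "w @ z \<in> factor_words Alph x"
proof -
  obtain a b where "w = a @ x @ b" "a \<in> lists Alph" "b \<in> lists Alph"
    using assms(1) by (auto simp: factor_words_def)
  then show ?thesis
    using assms(2) unfolding factor_words_def by (intro CollectI exI[of _ a] exI[of _ "b @ z"]) simp
qed

definition sandwich_words :: "'a set \<Rightarrow> 'a list \<Rightarrow> 'a list \<Rightarrow> 'a list set" where
  "sandwich_words Alph x u = {s @ x @ a @ u @ b @ x @ t | s a b t.
     s \<in> lists Alph \<and> a \<in> lists Alph \<and> b \<in> lists Alph \<and> t \<in> lists Alph}"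

lemma sandwich_wordsI:
  assumes "a \<in> lists Alph" "b \<in> lists Alph"
  shows "x @ a @ u @ b @ x \<in> sandwich_words Alph x u"
proof -
  have "x @ a @ u @ b @ x = [] @ x @ a @ u @ b @ x @ []" by simp
  with assms show ?thesis unfolding sandwich_words_def by blast
qed

lemma sandwich_words_subset_factor_words:
  assumes "x \<in> lists Alph" "u \<in> lists Alph"
  shows "sandwich_words Alph x u \<subseteq> factor_words Alph x \<inter> factor_words Alph u"
proof
  fix w assume "w \<in> sandwich_words Alph x u"
  then obtain s a b t where "w = s @ x @ (a @ u @ b @ x @ t)" "w = (s @ x @ a) @ u @ (b @ x @ t)"
    and "s \<in> lists Alph" "a @ u @ b @ x @ t \<in> lists Alph"
    and "s @ x @ a \<in> lists Alph" "b @ x @ t \<in> lists Alph"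
    using assms by (auto simp: sandwich_words_def)
  then show "w \<in> factor_words Alph x \<inter> factor_words Alph u"
    unfolding factor_words_def by blast
qed

lemma sandwich_words_append_closed:
  assumes "w \<in> sandwich_words Alph x u" "s' \<in> lists Alph"
  shows "s' @ w \<in> sandwich_words Alph x u" "w @ s' \<in> sandwich_words Alph x u"
proof -
  obtain s a b t where "w = s @ x @ a @ u @ b @ x @ t"
    and stab: "s \<in> lists Alph" "a \<in> lists Alph" "b \<in> lists Alph" "t \<in> lists Alph"
    using assms(1) by (auto simp: sandwich_words_def)
  with assms(2) have "s' @ w = (s' @ s) @ x @ a @ u @ b @ x @ t" "s' @ s \<in> lists Alph"
    and "w @ s' = s @ x @ a @ u @ b @ x @ (t @ s')" "t @ s' \<in> lists Alph"
    by simp_all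
  with stab show "s' @ w \<in> sandwich_words Alph x u" "w @ s' \<in> sandwich_words Alph x u"
    unfolding sandwich_words_def by blast+
qed

lemma index_mult_mat_sum:
  assumes "A \<in> carrier_mat n m" "B \<in> carrier_mat m p" "x < n" "y < p"
  shows "(A * B) $$ (x, y) = (\<Sum>l<m. A $$ (x, l) * B $$ (l, y))"
  using assms by (simp add: scalar_prod_def lessThan_atLeast0)

lemma assoc5_mult_mat:
  assumes "A \<in> carrier_mat N N" "B \<in> carrier_mat N N" "C \<in> carrier_mat N N"
    "D \<in> carrier_mat N N" "E \<in> carrier_mat N N"
  shows "A * B * C * D * E = A * (B * (C * (D * E)))"
proof -
  have "A * B * C * D * E = A * B * C * (D * E)"
    using assms by (intro assoc_mult_mat) auto
  also have "\<dots> = A * B * (C * (D * E))"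
    using assms by (intro assoc_mult_mat) auto
  also have "\<dots> = A * (B * (C * (D * E)))"
    using assms by (intro assoc_mult_mat) auto
  finally show ?thesis .
qed

definition mat_unit :: "nat \<Rightarrow> nat \<Rightarrow> nat \<Rightarrow> 'a :: semiring_1 mat" where
  "mat_unit N a b = mat N N (\<lambda>(x, y). if x = a \<and> y = b then 1 else 0)"

lemma mat_unit_carrier [simp]: "mat_unit N a b \<in> carrier_mat N N"
  by (simp add: mat_unit_def)

lemma mult_mat_unit_mult_index:
  fixes A B :: "'a :: semiring_1 mat"
  assumes A: "A \<in> carrier_mat N N" and B: "B \<in> carrier_mat N N"
    and "a < N" "b < N" "x < N" "y < N"
  shows "(A * mat_unit N a b * B) $$ (x, y) = A $$ (x, a) * B $$ (b, y)"
proof -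
  have AE: "(A * mat_unit N a b) $$ (x, l) = (if l = b then A $$ (x, a) else 0)" if "l < N" for l
  proof -
    have "(A * mat_unit N a b) $$ (x, l) = (\<Sum>m<N. A $$ (x, m) * mat_unit N a b $$ (m, l))"
      using A assms that by (intro index_mult_mat_sum) auto
    also have "\<dots> = (\<Sum>m<N. if m = a then (if l = b then A $$ (x, a) else 0) else 0)"
      using that by (intro sum.cong) (auto simp: mat_unit_def)
    finally show ?thesis using assms by simp
  qed
  have "(A * mat_unit N a b * B) $$ (x, y) = (\<Sum>l<N. (A * mat_unit N a b) $$ (x, l) * B $$ (l, y))"
    using A B assms by (intro index_mult_mat_sum) auto
  also have "\<dots> = (\<Sum>l<N. if l = b then A $$ (x, a) * B $$ (b, y) else 0)"
    by (intro sum.cong) (auto simp: AE)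
  finally show ?thesis using assms by simp
qed

lemma nonzero_mat_index:
  assumes "A \<in> carrier_mat N N" "A \<noteq> 0\<^sub>m N N"
  shows "\<exists>p<N. \<exists>q<N. A $$ (p, q) \<noteq> 0"
proof (rule ccontr)
  assume "\<not> ?thesis"
  then have "A = 0\<^sub>m N N" using assms(1) by (intro eq_matI) auto
  with assms(2) show False ..
qed

lemma mat_sandwich_nonzero:
  fixes h U :: "'a :: idom mat"
  assumes h: "h \<in> carrier_mat N N" "h \<noteq> 0\<^sub>m N N" and U: "U \<in> carrier_mat N N" "U \<noteq> 0\<^sub>m N N"
  shows "\<exists>X\<in>carrier_mat N N. \<exists>Y\<in>carrier_mat N N. h * X * U * Y * h \<noteq> 0\<^sub>m N N"
proof -
  obtain p q where pq: "p < N" "q < N" "h $$ (p, q) \<noteq> 0" using nonzero_mat_index h by blast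
  obtain s t where st: "s < N" "t < N" "U $$ (s, t) \<noteq> 0" using nonzero_mat_index U by blast
  have "(h * mat_unit N q s * U * mat_unit N t p * h) $$ (p, q)
      = (h * mat_unit N q s * (U * mat_unit N t p * h)) $$ (p, q)"
    using h U by (simp add: assoc_mult_mat[of _ N N _ N _ N] mult_carrier_mat[of _ N N _ N])
  also have "\<dots> = h $$ (p, q) * (U * mat_unit N t p * h) $$ (s, q)"
    using h U pq st by (intro mult_mat_unit_mult_index) auto
  also have "(U * mat_unit N t p * h) $$ (s, q) = U $$ (s, t) * h $$ (p, q)"
    using h U pq st by (intro mult_mat_unit_mult_index) auto
  finally have "(h * mat_unit N q s * U * mat_unit N t p * h) $$ (p, q)
      = h $$ (p, q) * (U $$ (s, t) * h $$ (p, q))" .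
  then have "(h * mat_unit N q s * U * mat_unit N t p * h) $$ (p, q) \<noteq> 0"
    using pq st by simp
  then have "h * mat_unit N q s * U * mat_unit N t p * h \<noteq> 0\<^sub>m N N"
    using pq by auto
  then show ?thesis by (meson mat_unit_carrier)
qed

lemma rho_carrier [simp]: "rho n delta w \<in> carrier_mat (n - 1) (n - 1)"
  by (simp add: rho_def)

lemma rho_Nil: "rho n delta [] = 1\<^sub>m (n - 1)"
  by (rule eq_matI) (auto simp: rho_def)

lemma rho_append:
  assumes dfa: "is_DFA n Alph delta" and a: "a \<in> lists Alph" and b: "b \<in> lists Alph"
  shows "rho n delta (a @ b) = rho n delta a * rho n delta b"
proof (rule eq_matI)
  fix j c assume "j < dim_row (rho n delta a * rho n delta b)" "c < dim_col (rho n delta a * rho n delta b)"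
  then have j: "j < n - 1" and c: "c < n - 1" by (auto simp: rho_def)
  define col :: "nat \<Rightarrow> complex" where
    "col l = (if act delta l b = c then 1 else 0) - (if act delta (n - 1) b = c then 1 else 0)" for l
  \<comment> \<open>col l is the l-th row of rho b for l < n - 1, and col (n - 1) = 0 since b_(n-1) = 0.\<close>
  have row_select: "(\<Sum>l<n - 1. (if p = l then 1 else 0) * rho n delta b $$ (l, c)) = col p"
    if "p < n" for p
  proof -
    have "(\<Sum>l<n - 1. (if p = l then 1 else 0) * rho n delta b $$ (l, c))
        = (\<Sum>l<n - 1. if p = l then col l else 0)"
      using c by (intro sum.cong) (auto simp: rho_def col_def)
    also have "\<dots> = col p"
      using that by (cases "p = n - 1") (auto simp: col_def)
    finally show ?thesis .
  qed
  have "(rho n delta a * rho n delta b) $$ (j, c)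
      = (\<Sum>l<n - 1. rho n delta a $$ (j, l) * rho n delta b $$ (l, c))"
    by (rule index_mult_mat_sum[OF rho_carrier rho_carrier j c])
  also have "\<dots> = (\<Sum>l<n - 1. (if act delta j a = l then 1 else 0) * rho n delta b $$ (l, c)
       - (if act delta (n - 1) a = l then 1 else 0) * rho n delta b $$ (l, c))"
    using j by (intro sum.cong) (auto simp: rho_def left_diff_distrib)
  also have "\<dots> = col (act delta j a) - col (act delta (n - 1) a)"
    using row_select act_less[OF dfa _ a] j by (simp add: sum_subtractf)
  also have "\<dots> = rho n delta (a @ b) $$ (j, c)"
    using j c by (simp add: rho_def col_def act_append)
  finally show "rho n delta (a @ b) $$ (j, c) = (rho n delta a * rho n delta b) $$ (j, c)" ..
qed (auto simp: rho_def)

lemma rho_eq_0_if_rk_le_1: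
  assumes "rk n delta w \<le> 1"
  shows "rho n delta w = 0\<^sub>m (n - 1) (n - 1)"
proof -
  have "card (img n delta w) \<le> Suc 0"
    using assms by (simp add: rk_def)
  then have "\<forall>p\<in>img n delta w. \<forall>q\<in>img n delta w. p = q"
    using card_le_Suc0_iff_eq[OF finite_img] by blast
  then have "act delta p w = act delta q w" if "p < n" "q < n" for p q
    using that unfolding img_def by blast
  then show ?thesis by (intro eq_matI) (auto simp: rho_def)
qed

section \<open>Set systems with small pairwise intersections\<close>

lemma card_le_D2:
  assumes "F \<subseteq> {S. S \<subseteq> {1..n} \<and> card S = r}"
    and "\<forall>P. P \<subseteq> {1..n} \<and> card P = 2 \<longrightarrow> card {S\<in>F. P \<subseteq> S} \<le> 1"
  shows "card F \<le> D2 r n"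
  unfolding D2_def
proof (rule Max_ge)
  show "finite {card F | F. F \<subseteq> {S. S \<subseteq> {1..n} \<and> card S = r}
      \<and> (\<forall>P. P \<subseteq> {1..n} \<and> card P = 2 \<longrightarrow> card {S\<in>F. P \<subseteq> S} \<le> 1)}"
    by (rule finite_subset[of _ "{..card (Pow {1..n})}"]) (auto intro!: card_mono)
qed (use assms in blast)

lemma card_le_D2_if_intersections_le_1:
  assumes S: "\<And>C. C \<in> Cs \<Longrightarrow> S C \<subseteq> {1..n} \<and> card (S C) = r"
    and r: "2 \<le> r"
    and meet: "\<And>C C'. C \<in> Cs \<Longrightarrow> C' \<in> Cs \<Longrightarrow> 1 < card (S C \<inter> S C') \<Longrightarrow> C = C'"
  shows "finite Cs \<and> card Cs \<le> D2 r n"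
proof -
  have inj: "inj_on S Cs"
  proof (rule inj_onI)
    fix C C' assume C: "C \<in> Cs" "C' \<in> Cs" and "S C = S C'"
    then have "card (S C \<inter> S C') = r" using S by simp
    then show "C = C'" using meet[OF C] r by simp
  qed
  have "S ` Cs \<subseteq> Pow {1..n}" using S by blast
  then have fin: "finite (S ` Cs)" by (rule finite_subset) simp
  have "card {T\<in>S ` Cs. P \<subseteq> T} \<le> 1" if P: "card P = 2" for P
  proof -
    have "T = T'" if T: "T \<in> S ` Cs" "T' \<in> S ` Cs" "P \<subseteq> T" "P \<subseteq> T'" for T T'
    proof -
      obtain C C' where "C \<in> Cs" "C' \<in> Cs" "T = S C" "T' = S C'" using T(1,2) by blast
      moreover have "finite (T \<inter> T')" using \<open>S ` Cs \<subseteq> Pow {1..n}\<close> T(1)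
        by (meson Int_lower1 PowD finite_atLeastAtMost finite_subset subsetD)
      then have "card P \<le> card (T \<inter> T')" using T(3,4) by (intro card_mono) auto
      ultimately show ?thesis using meet[of C C'] P by simp
    qed
    moreover have "finite {T\<in>S ` Cs. P \<subseteq> T}" using fin by simp
    ultimately show ?thesis by (auto simp: card_le_Suc0_iff_eq)
  qed
  then have "card (S ` Cs) \<le> D2 r n"
    using S by (intro card_le_D2) auto
  moreover have "finite Cs" using fin inj by (rule finite_imageD)
  ultimately show ?thesis using card_image[OF inj] by simp
qed

lemma shortest_word_to_class:
  fixes f :: "'x \<Rightarrow> 'a list \<Rightarrow> 'x"
  assumes E: "equiv A E"
    and closed: "\<And>x w. x \<in> A \<Longrightarrow> w \<in> lists Alph \<Longrightarrow> f x w \<in> A"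
    and f_append: "\<And>x a b. x \<in> A \<Longrightarrow> a \<in> lists Alph \<Longrightarrow> b \<in> lists Alph \<Longrightarrow> f x (a @ b) = f (f x a) b"
    and compat: "\<And>x y w. (x, y) \<in> E \<Longrightarrow> w \<in> lists Alph \<Longrightarrow> (f x w, f y w) \<in> E"
    and x: "x \<in> A" and reach: "z0 \<in> lists Alph" "(f x z0, t) \<in> E"
    and fin: "finite (A // E - {E `` {t}})"
  shows "\<exists>z\<in>lists Alph. length z \<le> card (A // E - {E `` {t}}) \<and> (f x z, t) \<in> E"
proof -
  define P where "P z \<longleftrightarrow> z \<in> lists Alph \<and> (f x z, t) \<in> E" for z
  obtain z where Pz: "P z" and shortest: "\<And>y. P y \<Longrightarrow> length z \<le> length y"
    using ex_has_least_nat[of P z0 length] reach by (auto simp: P_def)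
  have z: "z \<in> lists Alph" "(f x z, t) \<in> E" using Pz by (auto simp: P_def)
  have t: "t \<in> A" using reach(2) equiv_type[OF E] by blast
  have take: "take j z \<in> lists Alph" and drop: "drop j z \<in> lists Alph" for j
    using z(1) by (auto dest: in_set_takeD in_set_dropD)
  define cl where "cl j = E `` {f x (take j z)}" for j
  \<comment> \<open>A prefix in the target class, or two prefixes in the same class, would give a shorter word.\<close>
  have cl_nontarget: "cl j \<in> A // E - {E `` {t}}" if "j < length z" for j
  proof -
    have "(f x (take j z), t) \<notin> E"
      using shortest[of "take j z"] take that by (auto simp: P_def)
    then have "cl j \<noteq> E `` {t}"
      using eq_equiv_class_iff[OF E closed[OF x take] t] by (simp add: cl_def)
    then show ?thesis using closed[OF x take] by (simp add: cl_def quotientI)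
  qed
  have cl_inj: "inj_on cl {..<length z}"
  proof (rule linorder_inj_onI')
    fix j k assume jk: "j \<in> {..<length z}" "k \<in> {..<length z}" "j < k"
    show "cl j \<noteq> cl k"
    proof
      assume "cl j = cl k"
      then have "(f x (take j z), f x (take k z)) \<in> E"
        using E closed[OF x take] by (simp add: cl_def eq_equiv_class_iff)
      then have "(f (f x (take j z)) (drop k z), f (f x (take k z)) (drop k z)) \<in> E"
        using compat drop by blast
      moreover have "f (f x (take k z)) (drop k z) = f x z"
        using f_append[OF x take drop, of k k] by simp
      ultimately have "(f x (take j z @ drop k z), f x z) \<in> E"
        using f_append[OF x take drop] by simp
      then have "(f x (take j z @ drop k z), t) \<in> E"
        using transD[OF _ _ z(2)] E by (auto simp: equiv_def)
      then have "P (take j z @ drop k z)"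
        using take drop by (simp add: P_def)
      then show False using shortest jk by force
    qed
  qed
  have "length z = card (cl ` {..<length z})"
    using card_image[OF cl_inj] by simp
  also have "\<dots> \<le> card (A // E - {E `` {t}})"
    using cl_nontarget fin by (intro card_mono) auto
  finally show ?thesis using z by blast
qed

section \<open>A Wedderburn--Artin component\<close>

locale wa_component =
  fixes n :: nat and Alph :: "'a set" and delta :: "nat \<Rightarrow> 'a \<Rightarrow> nat" and k i :: nat
    and ns :: "nat \<Rightarrow> nat" and Phi :: "complex mat \<Rightarrow> nat \<Rightarrow> complex mat"
  assumes dfa: "is_DFA n Alph delta"
    and wa: "WA_decomposition (n - 1) (algR n Alph delta) k ns Phi"
    and i_less: "i < k"
begin

abbreviation "th \<equiv> theta n delta Phi i"
abbreviation "N \<equiv> ns i"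
abbreviation "Z \<equiv> 0\<^sub>m (ns i) (ns i)"

lemma rho_in_algR: "w \<in> lists Alph \<Longrightarrow> rho n delta w \<in> algR n Alph delta"
  by (simp add: algR_def gen_alg.gen)

lemma Phi_carrier: "x \<in> algR n Alph delta \<Longrightarrow> Phi x i \<in> carrier_mat N N"
  using wa i_less by (simp add: WA_decomposition_def)

lemma Phi_add: "x \<in> algR n Alph delta \<Longrightarrow> y \<in> algR n Alph delta \<Longrightarrow> Phi (x + y) i = Phi x i + Phi y i"
  using wa i_less by (simp add: WA_decomposition_def)

lemma Phi_smult: "x \<in> algR n Alph delta \<Longrightarrow> Phi (c \<cdot>\<^sub>m x) i = c \<cdot>\<^sub>m Phi x i"
  using wa i_less by (simp add: WA_decomposition_def)

lemma Phi_mult: "x \<in> algR n Alph delta \<Longrightarrow> y \<in> algR n Alph delta \<Longrightarrow> Phi (x * y) i = Phi x i * Phi y i"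
  using wa i_less by (simp add: WA_decomposition_def)

lemma Phi_one: "Phi (1\<^sub>m (n - 1)) i = 1\<^sub>m N"
  using wa i_less by (simp add: WA_decomposition_def)

lemma Phi_zero: "Phi (0\<^sub>m (n - 1) (n - 1)) i = Z"
proof -
  have one: "1\<^sub>m (n - 1) \<in> algR n Alph delta"
    by (simp add: algR_def gen_alg.one)
  have "0\<^sub>m (n - 1) (n - 1) = (0 :: complex) \<cdot>\<^sub>m 1\<^sub>m (n - 1)"
    by (rule eq_matI) auto
  then have "Phi (0\<^sub>m (n - 1) (n - 1)) i = 0 \<cdot>\<^sub>m 1\<^sub>m N"
    by (simp only: Phi_smult[OF one] Phi_one)
  also have "\<dots> = Z"
    by (rule eq_matI) auto
  finally show ?thesis .
qed

lemma Phi_surj: "X \<in> carrier_mat N N \<Longrightarrow> \<exists>x\<in>algR n Alph delta. Phi x i = X"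
proof -
  assume X: "X \<in> carrier_mat N N"
  define A where "A j = (if j = i then X else 0\<^sub>m (ns j) (ns j))" for j
  have "\<forall>j<k. A j \<in> carrier_mat (ns j) (ns j)" using X by (simp add: A_def)
  then obtain x where "x \<in> algR n Alph delta" "\<forall>j<k. Phi x j = A j"
    using wa by (auto simp: WA_decomposition_def)
  then show ?thesis using i_less by (intro bexI[of _ x]) (auto simp: A_def)
qed

lemma theta_carrier: "w \<in> lists Alph \<Longrightarrow> th w \<in> carrier_mat N N"
  by (simp add: theta_def Phi_carrier rho_in_algR)

lemma theta_Nil: "th [] = 1\<^sub>m N"
  unfolding theta_def rho_Nil by (rule Phi_one)

lemma theta_append: "a \<in> lists Alph \<Longrightarrow> b \<in> lists Alph \<Longrightarrow> th (a @ b) = th a * th b"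
  by (simp add: theta_def rho_append[OF dfa] Phi_mult rho_in_algR)

lemma theta_eq_0_if_rk_le_1: "rk n delta w \<le> 1 \<Longrightarrow> th w = Z"
  unfolding theta_def by (simp only: rho_eq_0_if_rk_le_1 Phi_zero)

text \<open>Phi maps the algebra generated by the rho-images of words onto the i-th factor, so a
  condition linear in the middle factor that holds for all theta-images of words holds for all
  matrices.\<close>

lemma sandwich_vanishing_gen_alg:
  assumes "x \<in> gen_alg (n - 1) (rho n delta ` lists Alph)"
    and "P \<in> carrier_mat N N" "Q \<in> carrier_mat N N" "\<forall>w\<in>lists Alph. P * th w * Q = Z"
  shows "P * Phi x i * Q = Z"
  using assms
proof (induction x arbitrary: P Q rule: gen_alg.induct)
  case (gen A)
  then show ?case by (auto simp: theta_def)
next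
  case one
  then show ?case using theta_Nil by (metis lists.Nil Phi_one)
next
  case zero
  then show ?case by (simp only: Phi_zero) simp
next
  case (add A B)
  then have A: "A \<in> algR n Alph delta" and B: "B \<in> algR n Alph delta" by (auto simp: algR_def)
  have "P * Phi (A + B) i * Q = P * Phi A i * Q + P * Phi B i * Q"
    using add.prems Phi_carrier[OF A] Phi_carrier[OF B]
    by (simp add: Phi_add A B mult_add_distrib_mat add_mult_distrib_mat[of _ N N])
  with add show ?case by simp
next
  case (smult A c)
  then have A: "A \<in> algR n Alph delta" by (auto simp: algR_def)
  have "P * Phi (c \<cdot>\<^sub>m A) i * Q = c \<cdot>\<^sub>m (P * Phi A i * Q)"
    using smult.prems Phi_carrier[OF A]
    by (simp add: Phi_smult A mult_smult_distrib[of _ N N] mult_smult_assoc_mat[of _ N N])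
  with smult show ?case by simp
next
  case (mult A B)
  then have A: "A \<in> algR n Alph delta" and B: "B \<in> algR n Alph delta" by (auto simp: algR_def)
  have "P * Phi A i * (th w * Q) = Z" if w: "w \<in> lists Alph" for w
  proof (rule mult.IH(1))
    show "\<forall>w'\<in>lists Alph. P * th w' * (th w * Q) = Z"
    proof
      fix w' assume w': "w' \<in> lists Alph"
      have "P * th w' * (th w * Q) = P * th (w' @ w) * Q"
        using mult.prems theta_carrier[OF w] theta_carrier[OF w']
        by (simp add: theta_append w w' assoc_mult_mat[of _ N N _ N _ N])
      then show "P * th w' * (th w * Q) = Z"
        using mult.prems w w' by simp
    qed
  qed (use mult.prems theta_carrier[OF w] in auto)
  moreover have "P * Phi A i * th w * Q = P * Phi A i * (th w * Q)" if "w \<in> lists Alph" for w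
    using mult.prems(1,2) Phi_carrier[OF A] theta_carrier[OF that]
    by (meson assoc_mult_mat mult_carrier_mat)
  ultimately have "P * Phi A i * th w * Q = Z" if "w \<in> lists Alph" for w
    using that by simp
  then have "P * Phi A i * Phi B i * Q = Z"
    using mult.prems Phi_carrier[OF A] by (intro mult.IH(2)) auto
  then show ?case
    using mult.prems Phi_carrier[OF A] Phi_carrier[OF B] by (simp add: Phi_mult A B)
qed

lemma sandwich_vanishing:
  assumes "P \<in> carrier_mat N N" "Q \<in> carrier_mat N N" "\<forall>w\<in>lists Alph. P * th w * Q = Z"
    and "X \<in> carrier_mat N N"
  shows "P * X * Q = Z"
  using Phi_surj[OF assms(4)] sandwich_vanishing_gen_alg[OF _ assms(1-3)] by (auto simp: algR_def)

lemma sandwich2_vanishing: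
  assumes P: "P \<in> carrier_mat N N" and Q: "Q \<in> carrier_mat N N" and R: "R \<in> carrier_mat N N"
    and vanish: "\<forall>a\<in>lists Alph. \<forall>b\<in>lists Alph. P * th a * Q * th b * R = Z"
    and X: "X \<in> carrier_mat N N" and Y: "Y \<in> carrier_mat N N"
  shows "P * X * Q * Y * R = Z"
proof (rule sandwich_vanishing)
  show "\<forall>b\<in>lists Alph. P * X * Q * th b * R = Z"
  proof
    fix b assume b: "b \<in> lists Alph"
    have "\<forall>a\<in>lists Alph. P * th a * (Q * th b * R) = Z"
      using vanish b P Q R theta_carrier[OF b] theta_carrier
      by (simp add: assoc_mult_mat[of _ N N _ N _ N] mult_carrier_mat[of _ N N _ N])
    then have "P * X * (Q * th b * R) = Z"
      using P Q R X theta_carrier[OF b] by (intro sandwich_vanishing) auto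
    then show "P * X * Q * th b * R = Z"
      using P Q R X theta_carrier[OF b]
      by (simp add: assoc_mult_mat[of _ N N _ N _ N] mult_carrier_mat[of _ N N _ N])
  qed
qed (use P Q R X Y in auto)

end

section \<open>A 0-minimal ideal of the component\<close>

locale zero_minimal_ideal_component = wa_component +
  fixes u :: "'a list" and I :: "complex mat set"
  assumes sync: "synchronizing n Alph delta"
    and u_words: "u \<in> lists Alph"
    and theta_u_nonzero: "th u \<noteq> Z"
    and zero_minimal: "zero_minimal_ideal (th ` lists Alph) Z I"
begin

abbreviation "r \<equiv> Rnk n Alph delta ns Phi i I"
abbreviation "rep \<equiv> u_represents n Alph delta ns Phi u i"
abbreviation "sigma \<equiv> sigma_rel n Alph delta ns Phi u i I"
abbreviation "sim \<equiv> sim_rel n Alph delta ns Phi u i I"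

lemma I_subset: "I \<subseteq> th ` lists Alph"
  using zero_minimal by (simp add: zero_minimal_ideal_def mon_ideal_def)

lemma I_mult:
  assumes "s \<in> lists Alph" "g \<in> I"
  shows "th s * g \<in> I" "g * th s \<in> I"
  using zero_minimal assms by (auto simp: zero_minimal_ideal_def mon_ideal_def)

lemma I_carrier: "g \<in> I \<Longrightarrow> g \<in> carrier_mat N N"
  using I_subset theta_carrier by blast

lemma I_minimal: "mon_ideal (th ` lists Alph) J \<Longrightarrow> J \<subseteq> I \<Longrightarrow> J = {Z} \<or> J = I"
  using zero_minimal by (simp add: zero_minimal_ideal_def)

lemma I_nonzero: "\<exists>g\<in>I. g \<noteq> Z"
  using zero_minimal by (auto simp: zero_minimal_ideal_def mon_ideal_def)

lemma reset_word: obtains z where "z \<in> lists Alph" "th z = Z"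
proof -
  obtain z where "z \<in> lists Alph" "rk n delta z = 1"
    using sync by (auto simp: synchronizing_def)
  then show ?thesis using that theta_eq_0_if_rk_le_1 by simp
qed

lemma zero_in_I: "Z \<in> I"
proof -
  obtain g where g: "g \<in> I" using I_nonzero by blast
  obtain z where "z \<in> lists Alph" "th z = Z" using reset_word by blast
  then show ?thesis using I_mult(2)[OF _ g] I_carrier[OF g] by force
qed

lemma Rnk_le: "x \<in> lists Alph \<Longrightarrow> th x \<in> I \<Longrightarrow> th x \<noteq> Z \<Longrightarrow> r \<le> rk n delta x"
  unfolding Rnk_def by (rule Min_le) (auto intro: finite_subset[of _ "{..n}"] simp: rk_le)

lemma Rnk_attained: obtains x where "x \<in> lists Alph" "th x \<in> I" "th x \<noteq> Z" "rk n delta x = r"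
proof -
  let ?ranks = "{rk n delta x | x. x \<in> lists Alph \<and> th x \<in> I \<and> th x \<noteq> Z}"
  have "finite ?ranks" by (rule finite_subset[of _ "{..n}"]) (auto simp: rk_le)
  moreover have "?ranks \<noteq> {}" using I_nonzero I_subset by blast
  ultimately have "r \<in> ?ranks" unfolding Rnk_def by (rule Min_in)
  then show ?thesis by (auto intro: that)
qed

lemma two_le_Rnk: "2 \<le> r"
proof -
  obtain x where "x \<in> lists Alph" "th x \<noteq> Z" "rk n delta x = r" using Rnk_attained by blast
  then have "\<not> rk n delta x \<le> 1" using theta_eq_0_if_rk_le_1 by blast
  with \<open>rk n delta x = r\<close> show ?thesis by simp
qed

lemma mon_ideal_theta_image:
  assumes "W \<subseteq> lists Alph" "W \<noteq> {}"
    and "\<And>w s. w \<in> W \<Longrightarrow> s \<in> lists Alph \<Longrightarrow> s @ w \<in> W \<and> w @ s \<in> W"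
  shows "mon_ideal (th ` lists Alph) (th ` W)"
  unfolding mon_ideal_def
proof (intro conjI ballI)
  fix m g assume "m \<in> th ` lists Alph" "g \<in> th ` W"
  then obtain s w where sw: "s \<in> lists Alph" "w \<in> W" and "m = th s" "g = th w" by blast
  moreover have "w \<in> lists Alph" using sw assms(1) by blast
  ultimately have "m * g = th (s @ w)" "g * m = th (w @ s)"
    using sw by (simp_all add: theta_append)
  moreover have "s @ w \<in> W" "w @ s \<in> W" using assms(3) sw by blast+
  ultimately show "m * g \<in> th ` W" "g * m \<in> th ` W" by simp_all
qed (use assms in auto)

lemma theta_factor_words_in_I:
  assumes "x \<in> lists Alph" "th x \<in> I" "w \<in> factor_words Alph x"
  shows "th w \<in> I"
proof -
  obtain a b where w: "w = a @ x @ b" "a \<in> lists Alph" "b \<in> lists Alph"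
    using assms(3) by (auto simp: factor_words_def)
  then show ?thesis using assms I_mult by (simp add: theta_append)
qed

lemma theta_sandwich:
  assumes "x \<in> lists Alph" "a \<in> lists Alph" "b \<in> lists Alph"
  shows "th (x @ a @ u @ b @ x) = th x * th a * th u * th b * th x"
  using assms u_words
  by (simp add: theta_append assoc5_mult_mat[of _ N] theta_carrier)

lemma sandwich_word_nonzero:
  assumes x: "x \<in> lists Alph" "th x \<noteq> Z"
  shows "\<exists>a\<in>lists Alph. \<exists>b\<in>lists Alph. th (x @ a @ u @ b @ x) \<noteq> Z"
proof (rule ccontr)
  have hx: "th x \<in> carrier_mat N N" and hu: "th u \<in> carrier_mat N N"
    using x u_words by (simp_all add: theta_carrier)
  obtain X Y where XY: "X \<in> carrier_mat N N" "Y \<in> carrier_mat N N"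
    and nonzero: "th x * X * th u * Y * th x \<noteq> Z"
    using mat_sandwich_nonzero[OF hx x(2) hu theta_u_nonzero] by blast
  assume "\<not> ?thesis"
  then have "\<forall>a\<in>lists Alph. \<forall>b\<in>lists Alph. th x * th a * th u * th b * th x = Z"
    using x by (simp add: theta_sandwich)
  then have "th x * X * th u * Y * th x = Z"
    by (rule sandwich2_vanishing[OF hx hu hx _ XY])
  with nonzero show False ..
qed

lemma theta_sandwich_words_eq_I:
  assumes x: "x \<in> lists Alph" "th x \<in> I" "th x \<noteq> Z"
  shows "th ` sandwich_words Alph x u = I"
proof -
  obtain a b where ab: "a \<in> lists Alph" "b \<in> lists Alph" "th (x @ a @ u @ b @ x) \<noteq> Z"
    using sandwich_word_nonzero x by blast
  have "x @ a @ u @ b @ x \<in> sandwich_words Alph x u" using sandwich_wordsI[OF ab(1,2)] .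
  with ab(3) have "th ` sandwich_words Alph x u \<noteq> {Z}" by blast
  moreover have "mon_ideal (th ` lists Alph) (th ` sandwich_words Alph x u)"
    using sandwich_words_subset_factor_words[OF x(1) u_words] factor_words_lists[OF x(1)]
      sandwich_words_append_closed \<open>x @ a @ u @ b @ x \<in> sandwich_words Alph x u\<close>
    by (intro mon_ideal_theta_image) blast+
  moreover have "th ` sandwich_words Alph x u \<subseteq> I"
    using sandwich_words_subset_factor_words[OF x(1) u_words] theta_factor_words_in_I[OF x(1,2)]
    by blast
  ultimately show ?thesis using I_minimal by blast
qed

lemma nonzero_has_short_u_factor:
  assumes g: "g \<in> I" "g \<noteq> Z"
  shows "\<exists>w\<in>factor_words Alph u. th w = g \<and> rk n delta w \<le> r"
proof -
  obtain x where x: "x \<in> lists Alph" "th x \<in> I" "th x \<noteq> Z" "rk n delta x = r"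
    using Rnk_attained by blast
  then obtain w where w: "w \<in> sandwich_words Alph x u" "th w = g"
    using theta_sandwich_words_eq_I g(1) by blast
  moreover have "w \<in> factor_words Alph x" "w \<in> factor_words Alph u"
    using sandwich_words_subset_factor_words[OF x(1) u_words] w(1) by blast+
  ultimately show ?thesis using rk_factor_le[OF dfa] x(4) by metis
qed

lemma u_represents_words: "rep g w \<Longrightarrow> w \<in> lists Alph"
  using factor_words_lists[OF u_words] by (simp add: u_represents_def)

lemma u_represents_rk:
  assumes "g \<in> I" "g \<noteq> Z" "rep g w"
  shows "rk n delta w = r"
proof -
  obtain w' where "w' \<in> factor_words Alph u" "th w' = g" "rk n delta w' \<le> r"
    using nonzero_has_short_u_factor assms(1,2) by blast
  then have "rk n delta w \<le> r"
    using assms(2,3) by (force simp: u_represents_def)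
  moreover have "r \<le> rk n delta w"
    using assms u_represents_words by (intro Rnk_le) (auto simp: u_represents_def)
  ultimately show ?thesis by simp
qed

lemma u_represents_exists:
  assumes "g \<in> I" "g \<noteq> Z"
  shows "\<exists>w. rep g w"
proof -
  obtain w where w: "w \<in> factor_words Alph u" "th w = g" "rk n delta w \<le> r"
    using nonzero_has_short_u_factor assms by blast
  have "rk n delta w \<le> rk n delta w'" if "w' \<in> factor_words Alph u" "th w' = g" for w'
    using Rnk_le[of w'] that assms factor_words_lists[OF u_words] w(3) by fastforce
  then show ?thesis using w by (auto simp: u_represents_def)
qed

lemma rk_u_represents_append:
  assumes g: "g \<in> I" and w: "rep g w" and z: "z \<in> lists Alph" and nonzero: "g * th z \<noteq> Z"
  shows "rk n delta (w @ z) = r"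
proof -
  have "g \<noteq> Z" using nonzero theta_carrier[OF z] by auto
  then have "rk n delta w = r" using u_represents_rk g w by blast
  moreover have "th (w @ z) = g * th z"
    using w z u_represents_words by (simp add: theta_append u_represents_def)
  then have "r \<le> rk n delta (w @ z)"
    using Rnk_le I_mult(2)[OF z g] nonzero w z u_represents_words by simp
  ultimately show ?thesis using rk_append_le_prefix[of n delta w z] by simp
qed

lemma u_represents_append:
  assumes g: "g \<in> I" and w: "rep g w" and z: "z \<in> lists Alph"
  shows "rep (g * th z) (w @ z)"
proof -
  have "w \<in> factor_words Alph u" "th w = g"
    using w by (simp_all add: u_represents_def)
  then have "w @ z \<in> factor_words Alph u" "th (w @ z) = g * th z"
    using factor_words_append z theta_append u_represents_words[OF w] by simp_all
  moreover have "rk n delta (w @ z) \<le> rk n delta w'"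
    if "g * th z \<noteq> Z" "w' \<in> factor_words Alph u" "th w' = g * th z" for w'
    using rk_u_represents_append[OF g w z] Rnk_le[of w'] that I_mult(2)[OF z g]
      factor_words_lists[OF u_words] by simp
  ultimately show ?thesis by (auto simp: u_represents_def)
qed

lemma inj_on_act_u_represents:
  assumes "g \<in> I" "rep g w" "z \<in> lists Alph" "g * th z \<noteq> Z"
  shows "inj_on (\<lambda>q. act delta q z) (img n delta w)"
proof (rule eq_card_imp_inj_on)
  have "g \<noteq> Z" using assms(3,4) theta_carrier[OF assms(3)] by auto
  then show "card ((\<lambda>q. act delta q z) ` img n delta w) = card (img n delta w)"
    using rk_u_represents_append[OF assms] u_represents_rk assms(1,2)
    by (simp add: rk_def img_append)
qed simp

lemma equiv_sim: "equiv I sim"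
proof -
  have sym_sigma: "sym sigma"
    unfolding sigma_rel_def sym_def by clarsimp (metis Int_commute)
  have sigma: "sigma \<subseteq> I \<times> I" "\<And>g. g \<in> I \<Longrightarrow> (g, g) \<in> sigma"
    unfolding sigma_rel_def by auto
  then have "sim \<subseteq> I \<times> I" unfolding sim_rel_def by (intro trancl_subset_Sigma)
  moreover have "refl_on I sim" using calculation sigma(2) unfolding refl_on_def sim_rel_def by auto
  moreover have "sym sim" using sym_sigma unfolding sim_rel_def by (rule sym_trancl)
  moreover have "trans sim" unfolding sim_rel_def by (rule trans_trancl)
  ultimately show ?thesis by (simp add: equiv_def)
qed

lemma sigma_right_mult:
  assumes gf: "(g, f) \<in> sigma" and z: "z \<in> lists Alph"
  shows "(g * th z, f * th z) \<in> sigma"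
proof -
  have g: "g \<in> I" and f: "f \<in> I" using gf by (auto simp: sigma_rel_def)
  have I_z: "g * th z \<in> I" "f * th z \<in> I" using I_mult(2) g f z by auto
  show ?thesis
  proof (cases "g = f \<or> g * th z = Z \<and> f * th z = Z")
    case True
    then show ?thesis using I_z by (auto simp: sigma_rel_def)
  next
    case False
    then obtain w1 w2 where w: "rep g w1" "rep f w2"
      and "1 < card (img n delta w1 \<inter> img n delta w2)"
      using gf by (auto simp: sigma_rel_def)
    then obtain p q where pq: "p \<in> img n delta w1 \<inter> img n delta w2"
      "q \<in> img n delta w1 \<inter> img n delta w2" "p \<noteq> q"
      using card_le_Suc0_iff_eq[of "img n delta w1 \<inter> img n delta w2"] by auto
    have apart: "act delta p z \<noteq> act delta q z"
      using False inj_on_act_u_represents[OF g w(1) z] inj_on_act_u_represents[OF f w(2) z] pq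
      by (meson IntD1 IntD2 inj_on_contraD)
    have "card {act delta p z, act delta q z} \<le> card (img n delta (w1 @ z) \<inter> img n delta (w2 @ z))"
      using pq by (intro card_mono) (auto simp: img_append)
    with apart have "1 < card (img n delta (w1 @ z) \<inter> img n delta (w2 @ z))"
      by simp
    then show ?thesis
      using I_z u_represents_append[OF g w(1) z] u_represents_append[OF f w(2) z]
      by (auto simp: sigma_rel_def)
  qed
qed

lemma sim_right_mult:
  assumes "(g, f) \<in> sim" "z \<in> lists Alph"
  shows "(g * th z, f * th z) \<in> sim"
  using assms(1) unfolding sim_rel_def
proof (induction rule: trancl_induct)
  case (base f)
  then show ?case using sigma_right_mult assms(2) by blast
next
  case (step f h)
  then show ?case using sigma_right_mult assms(2) by (meson trancl_into_trancl)
qed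

lemma card_nonzero_classes_le:
  "finite (I // sim - {sim `` {Z}}) \<and> card (I // sim - {sim `` {Z}}) \<le> D2 r n"
proof -
  let ?NZ = "I // sim - {sim `` {Z}}"
  have "\<exists>w. \<exists>g\<in>C. g \<noteq> Z \<and> rep g w" if C: "C \<in> ?NZ" for C
  proof -
    obtain g where g: "g \<in> I" "C = sim `` {g}" using C by (auto elim: quotientE)
    then have "g \<in> C" using equiv_class_self[OF equiv_sim g(1)] by simp
    moreover have "g \<noteq> Z" using C g by auto
    ultimately show ?thesis using u_represents_exists g(1) by blast
  qed
  then obtain w where w: "\<And>C. C \<in> ?NZ \<Longrightarrow> \<exists>g\<in>C. g \<noteq> Z \<and> rep g (w C)" by metis
  show ?thesis
  proof (rule card_le_D2_if_intersections_le_1[where S = "\<lambda>C. Suc ` img n delta (w C)"])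
    fix C assume "C \<in> ?NZ"
    then obtain g where "g \<in> C" "g \<noteq> Z" "rep g (w C)" using w by blast
    moreover have "g \<in> I" using \<open>C \<in> ?NZ\<close> \<open>g \<in> C\<close> equiv_sim in_quotient_imp_subset by blast
    ultimately have "img n delta (w C) \<subseteq> {..<n}" "card (img n delta (w C)) = r"
      using img_subset_lessThan[OF dfa u_represents_words] u_represents_rk by (auto simp: rk_def)
    then show "Suc ` img n delta (w C) \<subseteq> {1..n} \<and> card (Suc ` img n delta (w C)) = r"
      by (auto simp: card_image)
  next
    show "2 \<le> r" by (rule two_le_Rnk)
  next
    fix C C' assume C: "C \<in> ?NZ" "C' \<in> ?NZ"
      and meet: "1 < card (Suc ` img n delta (w C) \<inter> Suc ` img n delta (w C'))"
    obtain g where g: "g \<in> C" "rep g (w C)" using w C(1) by blast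
    obtain g' where g': "g' \<in> C'" "rep g' (w C')" using w C(2) by blast
    have "g \<in> I" "g' \<in> I" using C g g' equiv_sim in_quotient_imp_subset by blast+
    moreover have "1 < card (img n delta (w C) \<inter> img n delta (w C'))"
      using meet by (simp add: image_Int[symmetric] card_image)
    ultimately have "(g, g') \<in> sigma" using g g' by (auto simp: sigma_rel_def)
    then have "(g, g') \<in> sim" by (simp add: sim_rel_def)
    then show "C = C'" using quotient_eqI[OF equiv_sim _ _ g(1) g'(1)] C by blast
  qed
qed

lemma card_quotient_sim_le: "card (I // sim) \<le> D2 r n + 1"
proof -
  have "card (I // sim) - 1 \<le> card (I // sim - {sim `` {Z}})"
    using diff_card_le_card_Diff[of "{sim `` {Z}}" "I // sim"] by simp
  moreover have "card (I // sim - {sim `` {Z}}) \<le> D2 r n"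
    using card_nonzero_classes_le by blast
  ultimately show ?thesis by arith
qed

lemma short_word_to_zero_class:
  assumes "g \<in> I"
  shows "\<exists>z\<in>lists Alph. length z \<le> D2 r n \<and> (g * th z, Z) \<in> sim"
proof -
  obtain z0 where z0: "z0 \<in> lists Alph" "th z0 = Z" using reset_word by blast
  have "(g * th z0, Z) \<in> sim"
    using z0 I_carrier[OF assms] zero_in_I equiv_sim by (simp add: equiv_def refl_on_def)
  then have "\<exists>z\<in>lists Alph. length z \<le> card (I // sim - {sim `` {Z}}) \<and> (g * th z, Z) \<in> sim"
  proof (intro shortest_word_to_class[OF equiv_sim, where f = "\<lambda>g z. g * th z"] z0(1) assms)
    show "g * th w \<in> I" if "g \<in> I" "w \<in> lists Alph" for g w
      using I_mult(2) that by blast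
    show "g * th (a @ b) = g * th a * th b" if "g \<in> I" "a \<in> lists Alph" "b \<in> lists Alph" for g a b
      using that I_carrier theta_carrier by (simp add: theta_append assoc_mult_mat[of _ N N _ N _ N])
    show "(g * th w, f * th w) \<in> sim" if "(g, f) \<in> sim" "w \<in> lists Alph" for g f w
      using sim_right_mult that by blast
  qed (use card_nonzero_classes_le z0(1) in auto)
  then show ?thesis using card_nonzero_classes_le le_trans by blast
qed

end

theorem mainTheorem10:
  fixes Alph :: "'a set" and delta :: "nat \<Rightarrow> 'a \<Rightarrow> nat" and n k i :: nat
    and ns :: "nat \<Rightarrow> nat" and Phi :: "complex mat \<Rightarrow> nat \<Rightarrow> complex mat"
    and v u :: "'a list" and I :: "complex mat set"
  assumes dfa: "is_DFA n Alph delta"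
    and sync: "synchronizing n Alph delta"
    and wa: "WA_decomposition (n - 1) (algR n Alph delta) k ns Phi"
    and v: "v \<in> lists Alph"
    and umin: "v_minimal n Alph delta k ns Phi v u"
    and i: "i \<in> supp n delta k ns Phi u"
    and I: "zero_minimal_ideal (theta n delta Phi i ` lists Alph) (0\<^sub>m (ns i) (ns i)) I"
  shows "card (I // sim_rel n Alph delta ns Phi u i I)
           \<le> D2 (Rnk n Alph delta ns Phi i I) n + 1
       \<and> (\<forall>g\<in>I. \<exists>z\<in>lists Alph. length z \<le> D2 (Rnk n Alph delta ns Phi i I) n
              \<and> (g * theta n delta Phi i z, 0\<^sub>m (ns i) (ns i)) \<in> sim_rel n Alph delta ns Phi u i I)"
proof -
  have u: "u \<in> lists Alph"
    using umin v by (auto simp: v_minimal_def factor_words_def)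
  have "i < k" "theta n delta Phi i u \<noteq> 0\<^sub>m (ns i) (ns i)"
    using i by (auto simp: supp_def)
  then interpret zero_minimal_ideal_component n Alph delta k i ns Phi u I
    using dfa sync wa u I by unfold_locales
  show ?thesis
    using card_quotient_sim_le short_word_to_zero_class by blast
qed

end
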